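(* Let $k$ be a field and let $H$ be an induced subgraph of the graph $G$ such that the complement graph $H^c$ is disconnected. Then $\operatorname{pd}^k(G)\geqslant |V(H)|-1$.
   Context: A graph is a finite simple graph with nonempty vertex set. For a graph $G$ with vertices $x_1,\dots,x_n$, $R_k(G)=k[x_1,\dots,x_n]$, $I(G)$ is the ideal generated by $x_ix_j$ for all edges $\{x_i,x_j\}$, and $\operatorname{pd}^k(G)$ is the projective dimension of the $R_k(G)$-module $R_k(G)/I(G)$. For a graph $H$, $H^c$ is the simple graph on the same vertex set in which two distinct vertices are adjacent iff they are not adjacent in $H$. An induced subgraph on a vertex subset $W$ has vertex set $W$ and all edges of $G$ with both ends in $W$. *)

theory Defs
  imports Main "HOL-Library.Poly_Mapping"
begin

text \<open>Polynomial ring k[x_v | v in V] for a finite vertex type 'v: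
  polynomials are finitely supported maps from monomials (exponent vectors) to coefficients.\<close>
type_synonym ('v, 'k) mpoly = "('v \<Rightarrow>\<^sub>0 nat) \<Rightarrow>\<^sub>0 'k"

definition var :: "'v \<Rightarrow> ('v, 'k::comm_ring_1) mpoly" where
  "var v = Poly_Mapping.single (Poly_Mapping.single v 1) 1"

text \<open>A simple graph on the finite vertex type 'v (vertex set = UNIV, nonempty):
  symmetric, irreflexive adjacency relation.\<close>
definition simple_graph :: "('v::finite \<Rightarrow> 'v \<Rightarrow> bool) \<Rightarrow> bool" where
  "simple_graph E \<longleftrightarrow> (\<forall>x y. E x y \<longrightarrow> E y x) \<and> (\<forall>x. \<not> E x x)"

definition edge_ideal :: "('v::finite \<Rightarrow> 'v \<Rightarrow> bool) \<Rightarrow> ('v, 'k::field) mpoly set" where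
  "edge_ideal E = {p. \<exists>c. p = (\<Sum>e\<in>{(i,j). E i j}. c e * var (fst e) * var (snd e))}"

text \<open>Free modules R^b are modelled as vectors nat => R vanishing from index b on;
  an R-linear map R^b -> R^a is given by a matrix.\<close>
definition vec_in :: "nat \<Rightarrow> (nat \<Rightarrow> 'r::zero) \<Rightarrow> bool" where
  "vec_in b v \<longleftrightarrow> (\<forall>j\<ge>b. v j = 0)"

definition lmap :: "nat \<Rightarrow> nat \<Rightarrow> (nat \<Rightarrow> nat \<Rightarrow> 'r::comm_ring_1) \<Rightarrow> (nat \<Rightarrow> 'r) \<Rightarrow> (nat \<Rightarrow> 'r)" where
  "lmap a b M v = (\<lambda>r. if r < a then (\<Sum>c<b. M r c * v c) else 0)"

text \<open>A finite free resolution of length n of R/I: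
   0 -> R^(bs n) --d n--> ... --d 1--> R^(bs 0) --eps--> R/I -> 0,
  where eps(v) = (sum_j v_j * e_j) mod I.  We set bs (n+1) = 0 so that exactness at
  R^(bs n) means injectivity of d n.\<close>
definition free_resolution ::
  "'r::comm_ring_1 set \<Rightarrow> nat \<Rightarrow> (nat \<Rightarrow> nat) \<Rightarrow> (nat \<Rightarrow> nat \<Rightarrow> nat \<Rightarrow> 'r) \<Rightarrow> (nat \<Rightarrow> 'r) \<Rightarrow> bool" where
  "free_resolution I n bs d e \<longleftrightarrow>
     bs (Suc n) = 0 \<and>
     \<comment> \<open>eps is surjective\<close>
     (\<exists>v. vec_in (bs 0) v \<and> (\<Sum>j<bs 0. v j * e j) - 1 \<in> I) \<and>
     \<comment> \<open>exactness at R^(bs 0): ker eps = im d 1\<close>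
     (\<forall>v. vec_in (bs 0) v \<longrightarrow>
        ((\<Sum>j<bs 0. v j * e j) \<in> I \<longleftrightarrow>
         (\<exists>w. vec_in (bs 1) w \<and> v = lmap (bs 0) (bs 1) (d 1) w))) \<and>
     \<comment> \<open>exactness at R^(bs i), 1 <= i <= n: ker d i = im d (i+1)\<close>
     (\<forall>i. 1 \<le> i \<and> i \<le> n \<longrightarrow>
        (\<forall>v. vec_in (bs i) v \<longrightarrow>
           (lmap (bs (i - 1)) (bs i) (d i) v = (\<lambda>_. 0) \<longleftrightarrow>
            (\<exists>w. vec_in (bs (Suc i)) w \<and> v = lmap (bs i) (bs (Suc i)) (d (Suc i)) w))))"

definition pd :: "'k::field itself \<Rightarrow> ('v::finite \<Rightarrow> 'v \<Rightarrow> bool) \<Rightarrow> nat" where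
  "pd _ E = (LEAST n. \<exists>bs d e. free_resolution (edge_ideal E :: ('v, 'k) mpoly set) n bs d e)"

definition complement_on :: "'v set \<Rightarrow> ('v \<Rightarrow> 'v \<Rightarrow> bool) \<Rightarrow> 'v \<Rightarrow> 'v \<Rightarrow> bool" where
  "complement_on W E x y \<longleftrightarrow> x \<in> W \<and> y \<in> W \<and> x \<noteq> y \<and> \<not> E x y"

definition connected_on :: "'v set \<Rightarrow> ('v \<Rightarrow> 'v \<Rightarrow> bool) \<Rightarrow> bool" where
  "connected_on W F \<longleftrightarrow> W \<noteq> {} \<and>
     (\<forall>x\<in>W. \<forall>y\<in>W. (x, y) \<in> ({(a, b). a \<in> W \<and> b \<in> W \<and> F a b})\<^sup>*)"

end

theory Submission
  imports Defs "HOL-Library.Function_Algebras"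
begin

text \<open>
  Since the complement of the induced subgraph on \<open>W\<close> is disconnected, \<open>W\<close> splits as
  \<open>A \<union> B\<close> with every vertex of \<open>A\<close> adjacent to every vertex of \<open>B\<close>. Enumerate
  \<open>W = {w\<^sub>0, \<dots>, w\<^bsub>N-1\<^esub>}\<close> and compute \<open>Tor(R/I(G), R/(x\<^sub>w : w \<in> W))\<close> in two ways.
  Through a free resolution of \<open>R/I(G)\<close> of length \<open>n\<close>, it vanishes above degree \<open>n\<close>.
  Through the Koszul complex on the variables \<open>x\<^sub>w\<close>, tensored with \<open>R/I(G)\<close>, the
  \<open>(N - 1)\<close>-chain \<open>\<Sum>\<^bsub>w\<^sub>l \<in> A\<^esub> (-1)\<^sup>l x\<^bsub>w\<^sub>l\<^esub> e\<^bsub>W - w\<^sub>l\<^esub>\<close> is a cycle, because its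
  boundary only involves products \<open>x\<^sub>a x\<^sub>b\<close> with \<open>a \<in> A\<close>, \<open>b \<in> B\<close>, which are edges;
  and it is not a boundary, because the boundary of \<open>c e\<^sub>W\<close> has coefficient \<open>\<plusminus>c x\<^sub>w\<close> at
  every \<open>e\<^bsub>W - w\<^esub>\<close>, while \<open>I(G)\<close> contains no linear monomial.

  That \<open>R/I(G)\<close> has a finite free resolution at all, so that \<open>pd\<close> is meaningful, comes from
  the Taylor resolution. Its exactness, and that of the Koszul complex in positive degrees,
  is checked one multidegree at a time: there the Taylor complex becomes the cochain complex
  of a simplex, which is contracted by an explicit homotopy.
\<close>

section \<open>Squarefree monomials\<close>

definition set_exponent :: "'v::finite set \<Rightarrow> 'v \<Rightarrow>\<^sub>0 nat" where
  "set_exponent U = Abs_poly_mapping (\<lambda>v. if v \<in> U then 1 else 0)"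

definition set_monomial :: "'v::finite set \<Rightarrow> ('v, 'k::comm_ring_1) mpoly" where
  "set_monomial U = Poly_Mapping.single (set_exponent U) 1"

lemma lookup_set_exponent: "Poly_Mapping.lookup (set_exponent U) v = (if v \<in> U then 1 else 0)"
  unfolding set_exponent_def by (subst lookup_Abs_poly_mapping) auto

lemma set_exponent_singleton: "set_exponent {v} = Poly_Mapping.single v 1"
  by (rule poly_mapping_eqI) (simp add: lookup_set_exponent lookup_single when_def)

lemma set_monomial_union:
  assumes "U \<inter> V = {}"
  shows "set_monomial (U \<union> V) = (set_monomial U * set_monomial V :: ('v::finite, 'k::comm_ring_1) mpoly)"
proof -
  have "set_exponent (U \<union> V) = set_exponent U + set_exponent V"
    using assms by (intro poly_mapping_eqI) (auto simp: lookup_set_exponent lookup_add)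
  then show ?thesis by (simp add: set_monomial_def mult_single)
qed

lemma set_monomial_empty: "(set_monomial {} :: ('v::finite, 'k::comm_ring_1) mpoly) = 1"
proof -
  have "set_exponent ({} :: 'v set) = 0" by (rule poly_mapping_eqI) (simp add: lookup_set_exponent)
  then show ?thesis by (simp add: set_monomial_def)
qed

lemma var_eq_set_monomial: "var v = set_monomial {v}"
  by (simp add: var_def set_monomial_def set_exponent_singleton)

lemma var_mult_var: "u \<noteq> v \<Longrightarrow> var u * var v = (set_monomial {u, v} :: ('v::finite, 'k::comm_ring_1) mpoly)"
  using set_monomial_union[of "{u}" "{v}", where 'k='k] by (simp add: var_eq_set_monomial insert_commute)

lemma lookup_single_one_mult:
  fixes \<alpha> \<beta> :: "'v \<Rightarrow>\<^sub>0 nat" and p :: "('v \<Rightarrow>\<^sub>0 nat) \<Rightarrow>\<^sub>0 'k::comm_ring_1"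
  shows "Poly_Mapping.lookup (Poly_Mapping.single \<beta> 1 * p) \<alpha> =
    (if \<forall>v. Poly_Mapping.lookup \<beta> v \<le> Poly_Mapping.lookup \<alpha> v then Poly_Mapping.lookup p (\<alpha> - \<beta>) else 0)"
proof -
  have split: "\<alpha> = \<beta> + q \<longleftrightarrow> (\<forall>v. Poly_Mapping.lookup \<beta> v \<le> Poly_Mapping.lookup \<alpha> v) \<and> q = \<alpha> - \<beta>" for q
    by (auto simp: lookup_add lookup_minus poly_mapping_eq_iff fun_eq_iff)
  have "Poly_Mapping.lookup (Poly_Mapping.single \<beta> 1 * p) \<alpha> = (\<Sum>q. Poly_Mapping.lookup p q when \<alpha> = \<beta> + q)"
    by (simp add: lookup_mult lookup_single when_mult)
  also have "\<dots> = (if \<forall>v. Poly_Mapping.lookup \<beta> v \<le> Poly_Mapping.lookup \<alpha> v then Poly_Mapping.lookup p (\<alpha> - \<beta>) else 0)"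
  proof (cases "\<forall>v. Poly_Mapping.lookup \<beta> v \<le> Poly_Mapping.lookup \<alpha> v")
    case True
    then show ?thesis unfolding split by (simp add: when_def)
  next
    case False
    then have "\<alpha> \<noteq> \<beta> + q" for q unfolding split by blast
    then show ?thesis using False by (subst if_not_P) simp_all
  qed
  finally show ?thesis .
qed

lemma lookup_set_monomial_mult:
  "Poly_Mapping.lookup (set_monomial U * p) \<alpha> = (if U \<subseteq> Poly_Mapping.keys \<alpha> then Poly_Mapping.lookup p (\<alpha> - set_exponent U) else 0)"
proof -
  have "(\<forall>v. Poly_Mapping.lookup (set_exponent U) v \<le> Poly_Mapping.lookup \<alpha> v) \<longleftrightarrow> U \<subseteq> Poly_Mapping.keys \<alpha>"
    by (auto simp: lookup_set_exponent in_keys_iff)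
  then show ?thesis by (simp add: set_monomial_def lookup_single_one_mult)
qed

lemma lookup_set_monomial_mult_shift:
  "Poly_Mapping.lookup (set_monomial U * p) (\<beta> + set_exponent U) = Poly_Mapping.lookup p \<beta>"
proof -
  have "U \<subseteq> Poly_Mapping.keys (\<beta> + set_exponent U)"
    by (auto simp: in_keys_iff lookup_add lookup_set_exponent)
  then show ?thesis by (simp add: lookup_set_monomial_mult)
qed

lemma set_monomial_mult_cancel:
  "set_monomial U * p = set_monomial U * q \<Longrightarrow> p = q"
  by (metis lookup_set_monomial_mult_shift poly_mapping_eqI)

lemma exists_set_monomial_mult_eq:
  fixes f :: "('v::finite \<Rightarrow>\<^sub>0 nat) \<Rightarrow> 'k::comm_ring_1"
  assumes fin: "finite {\<alpha>. f \<alpha> \<noteq> 0}" and dvd: "\<And>\<alpha>. f \<alpha> \<noteq> 0 \<Longrightarrow> U \<subseteq> Poly_Mapping.keys \<alpha>"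
  shows "\<exists>p. \<forall>\<alpha>. Poly_Mapping.lookup (set_monomial U * p) \<alpha> = f \<alpha>"
proof
  have "finite {\<beta>. f (\<beta> + set_exponent U) \<noteq> 0}"
    using finite_vimageI[OF fin, of "\<lambda>\<beta>. \<beta> + set_exponent U"] by (simp add: inj_on_def vimage_def)
  then have lookup_p: "Poly_Mapping.lookup (Abs_poly_mapping (\<lambda>\<beta>. f (\<beta> + set_exponent U))) = (\<lambda>\<beta>. f (\<beta> + set_exponent U))"
    by (rule lookup_Abs_poly_mapping)
  show "\<forall>\<alpha>. Poly_Mapping.lookup (set_monomial U * Abs_poly_mapping (\<lambda>\<beta>. f (\<beta> + set_exponent U))) \<alpha> = f \<alpha>"
  proof
    fix \<alpha>
    show "Poly_Mapping.lookup (set_monomial U * Abs_poly_mapping (\<lambda>\<beta>. f (\<beta> + set_exponent U))) \<alpha> = f \<alpha>"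
    proof (cases "U \<subseteq> Poly_Mapping.keys \<alpha>")
      case True
      then have "\<alpha> - set_exponent U + set_exponent U = \<alpha>"
        by (intro poly_mapping_eqI) (auto simp: lookup_add lookup_minus lookup_set_exponent in_keys_iff)
      then show ?thesis using True by (simp add: lookup_set_monomial_mult lookup_p)
    next
      case False
      then show ?thesis using dvd by (auto simp: lookup_set_monomial_mult)
    qed
  qed
qed

lemma lookup_neg_one_power_mult:
  "Poly_Mapping.lookup ((-1) ^ n * p) \<alpha> = (-1) ^ n * Poly_Mapping.lookup (p :: ('v, 'k::comm_ring_1) mpoly) \<alpha>"
  by (induction n) simp_all

lemma lookup_var_mult:
  fixes q :: "('v::finite, 'k::comm_ring_1) mpoly"
  shows "Poly_Mapping.lookup (var v * q) (Poly_Mapping.single v 1) = Poly_Mapping.lookup q 0"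
  using lookup_set_monomial_mult_shift[of "{v}" q 0] by (simp add: var_eq_set_monomial set_exponent_singleton)

section \<open>The cochain complex of a simplex\<close>

definition insertion_sign :: "nat \<Rightarrow> nat set \<Rightarrow> 'a::comm_ring_1" where
  "insertion_sign j T = (-1) ^ card {t \<in> T. t < j}"

lemma insertion_sign_square [simp]: "insertion_sign j T * insertion_sign j T = 1"
  by (simp add: insertion_sign_def flip: power_add)

lemma insertion_sign_insert:
  assumes "l \<noteq> j" "l \<notin> T"
  shows "insertion_sign j (insert l T) = (if l < j then - insertion_sign j T else insertion_sign j T)"
proof (cases "l < j")
  case True
  then have "{t \<in> insert l T. t < j} = insert l {t \<in> T. t < j}" by auto
  moreover have "finite {t \<in> T. t < j}" by (rule finite_subset[of _ "{..<j}"]) auto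
  ultimately show ?thesis using True assms by (simp add: insertion_sign_def)
next
  case False
  then have "{t \<in> insert l T. t < j} = {t \<in> T. t < j}" by auto
  then show ?thesis using False by (simp add: insertion_sign_def)
qed

lemma insertion_sign_swap:
  assumes "j \<noteq> l" "j \<notin> T" "l \<notin> T"
  shows "insertion_sign j T * insertion_sign l (insert j T) =
    - (insertion_sign l T * insertion_sign j (insert l T) :: 'a::comm_ring_1)"
  using assms by (cases "j < l") (simp_all add: insertion_sign_insert)

definition simplex_diff :: "nat \<Rightarrow> (nat set \<Rightarrow> 'a::comm_ring_1) \<Rightarrow> nat set \<Rightarrow> 'a" where
  "simplex_diff r f T = (\<Sum>j\<in>{..<r} - T. insertion_sign j T * f (insert j T))"

definition cone_homotopy :: "nat \<Rightarrow> (nat set \<Rightarrow> 'a::comm_ring_1) \<Rightarrow> nat set \<Rightarrow> 'a" where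
  "cone_homotopy j0 f S = (if j0 \<in> S then insertion_sign j0 (S - {j0}) * f (S - {j0}) else 0)"

lemma simplex_diff_twice: "simplex_diff r (simplex_diff r f) T = 0"
proof -
  define A where "A = {..<r} - T"
  define F where "F j l = insertion_sign j T * insertion_sign l (insert j T) * f (insert l (insert j T))" for j l
  have antisym: "F l j = - F j l" if "j \<in> A" "l \<in> A" "j \<noteq> l" for j l
    using that insertion_sign_swap[of j l T, where 'a='a] by (simp add: A_def F_def insert_commute)
  have "simplex_diff r (simplex_diff r f) T = (\<Sum>j\<in>A. \<Sum>l\<in>A - {j}. F j l)"
  proof -
    have "{..<r} - insert j T = A - {j}" for j by (auto simp: A_def)
    then show ?thesis by (simp add: simplex_diff_def A_def F_def sum_distrib_left mult.assoc)
  qed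
  also have "\<dots> = (\<Sum>j\<in>A. \<Sum>l\<in>{l\<in>A. l < j}. F j l) + (\<Sum>j\<in>A. \<Sum>l\<in>{l\<in>A. j < l}. F j l)"
  proof -
    have "A - {j} = {l\<in>A. l < j} \<union> {l\<in>A. j < l}" for j by auto
    then show ?thesis
      by (simp add: A_def sum.union_disjoint disjoint_iff sum.distrib flip: sum.distrib)
  qed
  also have "(\<Sum>j\<in>A. \<Sum>l\<in>{l\<in>A. j < l}. F j l) = (\<Sum>l\<in>A. \<Sum>j\<in>{j\<in>A. j < l}. F j l)"
    by (rule sum.swap_restrict) (simp_all add: A_def)
  also have "\<dots> = (\<Sum>l\<in>A. \<Sum>j\<in>{j\<in>A. j < l}. - F l j)"
    by (auto intro!: sum.cong antisym)
  finally show ?thesis by (simp add: sum_negf)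
qed

lemma simplex_diff_cone_homotopy:
  assumes "j0 < r"
  shows "simplex_diff r (cone_homotopy j0 f) T + cone_homotopy j0 (simplex_diff r f) T = f T"
proof (cases "j0 \<in> T")
  case False
  have "simplex_diff r (cone_homotopy j0 f) T = (\<Sum>j\<in>{..<r} - T. if j = j0 then f T else 0)"
    unfolding simplex_diff_def cone_homotopy_def
    by (rule sum.cong) (use False in \<open>auto simp: mult.assoc[symmetric]\<close>)
  then show ?thesis using assms False by (simp add: cone_homotopy_def)
next
  case True
  define T' where "T' = T - {j0}"
  define A where "A = {..<r} - T"
  have T: "T = insert j0 T'" "j0 \<notin> T'" using True by (auto simp: T'_def)
  have A: "{..<r} - T' = insert j0 A" "j0 \<notin> A" "finite A" using assms T by (auto simp: A_def)
  define G where "G j = insertion_sign j0 T' * insertion_sign j T' * f (insert j T')" for j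
  have "cone_homotopy j0 (simplex_diff r f) T = f T + (\<Sum>j\<in>A. G j)"
    using True A T by (simp add: cone_homotopy_def simplex_diff_def T'_def[symmetric] G_def
        distrib_left sum_distrib_left mult.assoc[symmetric])
  moreover have "simplex_diff r (cone_homotopy j0 f) T = (\<Sum>j\<in>A. - G j)"
    unfolding simplex_diff_def A_def[symmetric]
  proof (rule sum.cong)
    fix j assume "j \<in> A"
    then have j: "j \<noteq> j0" "j \<notin> T'" using T by (auto simp: A_def)
    then have "insert j T - {j0} = insert j T'" using T by auto
    then show "insertion_sign j T * cone_homotopy j0 f (insert j T) = - G j"
      using T j by (cases "j < j0") (simp_all add: cone_homotopy_def G_def insertion_sign_insert)
  qed simp
  ultimately show ?thesis by (simp add: sum_negf)
qed

section \<open>The Taylor complex\<close>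

text \<open>The generator \<open>e\<^sub>S\<close> of the Taylor complex of monomials \<open>x\<^bsup>g j\<^esup>\<close>, \<open>j < r\<close>, has multidegree
  \<open>\<Union>(g ` S)\<close>; a chain \<open>\<Sum> c S e\<^sub>S\<close> is represented by its coefficient function \<open>c\<close>, so that
  \<open>taylor_diff r g c T\<close> is the coefficient of \<open>e\<^sub>T\<close> in its differential.\<close>

definition taylor_diff ::
  "nat \<Rightarrow> (nat \<Rightarrow> 'v::finite set) \<Rightarrow> (nat set \<Rightarrow> ('v, 'k::comm_ring_1) mpoly) \<Rightarrow> nat set \<Rightarrow> ('v, 'k) mpoly"
where
  "taylor_diff r g c T = (\<Sum>j\<in>{..<r} - T.
     insertion_sign j T * set_monomial (\<Union>(g ` insert j T) - \<Union>(g ` T)) * c (insert j T))"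

text \<open>In each multidegree \<open>\<alpha>\<close>, the Taylor differential acts on these coefficients as the simplex
  differential.\<close>

definition taylor_coeff ::
  "(nat \<Rightarrow> 'v::finite set) \<Rightarrow> (nat set \<Rightarrow> ('v, 'k::comm_ring_1) mpoly) \<Rightarrow> ('v \<Rightarrow>\<^sub>0 nat) \<Rightarrow> nat set \<Rightarrow> 'k"
where
  "taylor_coeff g c \<alpha> S = Poly_Mapping.lookup (set_monomial (\<Union>(g ` S)) * c S) \<alpha>"

lemma lookup_insertion_sign_mult:
  "Poly_Mapping.lookup (insertion_sign j T * p) \<alpha> = insertion_sign j T * Poly_Mapping.lookup (p :: ('v, 'k::comm_ring_1) mpoly) \<alpha>"
  unfolding insertion_sign_def by (rule lookup_neg_one_power_mult)

lemma taylor_coeff_taylor_diff: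
  fixes c :: "nat set \<Rightarrow> ('v::finite, 'k::comm_ring_1) mpoly"
  shows "taylor_coeff g (taylor_diff r g c) \<alpha> = simplex_diff r (taylor_coeff g c \<alpha>)"
proof
  fix T
  have summand: "set_monomial (\<Union>(g ` T)) *
      (insertion_sign j T * set_monomial (\<Union>(g ` insert j T) - \<Union>(g ` T)) * c (insert j T)) =
      insertion_sign j T * (set_monomial (\<Union>(g ` insert j T)) * c (insert j T))" for j
  proof -
    have union: "set_monomial (\<Union>(g ` T)) * set_monomial (\<Union>(g ` insert j T) - \<Union>(g ` T)) =
        (set_monomial (\<Union>(g ` insert j T)) :: ('v, 'k) mpoly)"
      using set_monomial_union[of "\<Union>(g ` T)" "\<Union>(g ` insert j T) - \<Union>(g ` T)", where 'k='k]
      by (simp add: Un_absorb1)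
    show ?thesis unfolding union[symmetric] by (simp only: mult_ac)
  qed
  show "taylor_coeff g (taylor_diff r g c) \<alpha> T = simplex_diff r (taylor_coeff g c \<alpha>) T"
    unfolding taylor_coeff_def taylor_diff_def sum_distrib_left summand
    by (simp add: simplex_diff_def taylor_coeff_def lookup_sum lookup_insertion_sign_mult)
qed

lemma taylor_coeff_eqI:
  assumes "\<And>\<alpha>. taylor_coeff g c \<alpha> S = taylor_coeff g c' \<alpha> S"
  shows "c S = c' S"
  using assms by (intro set_monomial_mult_cancel[of "\<Union>(g ` S)", OF poly_mapping_eqI])
    (simp add: taylor_coeff_def)

lemma taylor_coeff_zero [simp]: "taylor_coeff g (\<lambda>_. 0) \<alpha> S = 0"
  by (simp add: taylor_coeff_def)

lemma taylor_coeff_nonzeroD: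
  "taylor_coeff g c \<alpha> S \<noteq> 0 \<Longrightarrow> c S \<noteq> 0 \<and> \<Union>(g ` S) \<subseteq> Poly_Mapping.keys \<alpha>"
  by (auto simp: taylor_coeff_def lookup_set_monomial_mult split: if_splits)

lemma finite_taylor_coeff_support: "finite {\<alpha>. taylor_coeff g c \<alpha> S \<noteq> 0}"
  by (simp add: taylor_coeff_def flip: in_keys_iff)

lemma exists_chain_taylor_coeff:
  fixes f :: "('v::finite \<Rightarrow>\<^sub>0 nat) \<Rightarrow> nat set \<Rightarrow> 'k::comm_ring_1"
  assumes "\<And>S. finite {\<alpha>. f \<alpha> S \<noteq> 0}"
    and "\<And>\<alpha> S. f \<alpha> S \<noteq> 0 \<Longrightarrow> \<Union>(g ` S) \<subseteq> Poly_Mapping.keys \<alpha>"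
  shows "\<exists>c. \<forall>\<alpha> S. taylor_coeff g c \<alpha> S = f \<alpha> S"
proof -
  have "\<forall>S. \<exists>p. \<forall>\<alpha>. Poly_Mapping.lookup (set_monomial (\<Union>(g ` S)) * p) \<alpha> = f \<alpha> S"
    using assms by (intro allI exists_set_monomial_mult_eq)
  then show ?thesis unfolding taylor_coeff_def by metis
qed

lemma taylor_diff_twice: "taylor_diff r g (taylor_diff r g c) T = 0"
proof -
  have "taylor_coeff g (taylor_diff r g (taylor_diff r g c)) \<alpha> T = taylor_coeff g (\<lambda>_. 0) \<alpha> T" for \<alpha>
    by (simp add: taylor_coeff_taylor_diff simplex_diff_twice)
  then show ?thesis by (rule taylor_coeff_eqI)
qed

lemma taylor_diff_zero [simp]: "taylor_diff r g (\<lambda>_. 0) T = 0"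
  by (simp add: taylor_diff_def)

lemma taylor_diff_sum:
  "taylor_diff r g (\<lambda>S. \<Sum>x\<in>C. a x * f x S) T = (\<Sum>x\<in>C. a x * taylor_diff r g (f x) T)"
  unfolding taylor_diff_def sum_distrib_left
  by (subst sum.swap) (simp add: mult.left_commute)

lemma taylor_diff_scale: "taylor_diff r g (\<lambda>S. a * c S) T = a * taylor_diff r g c T"
  by (simp add: taylor_diff_def sum_distrib_left ac_simps)

lemma taylor_diff_diff: "taylor_diff r g (\<lambda>S. c S - c' S) T = taylor_diff r g c T - taylor_diff r g c' T"
  by (simp add: taylor_diff_def algebra_simps sum_subtractf)

definition subsets_of_card :: "nat \<Rightarrow> nat \<Rightarrow> nat set set" where
  "subsets_of_card r p = {S. S \<subseteq> {..<r} \<and> card S = p}"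

definition chain_in :: "nat \<Rightarrow> nat \<Rightarrow> (nat set \<Rightarrow> 'a::zero) \<Rightarrow> bool" where
  "chain_in r p c \<longleftrightarrow> (\<forall>S. c S \<noteq> 0 \<longrightarrow> S \<in> subsets_of_card r p)"

lemma insert_in_subsets_of_card:
  "j \<notin> T \<Longrightarrow> insert j T \<in> subsets_of_card r (Suc p) \<longleftrightarrow> j < r \<and> T \<in> subsets_of_card r p"
  by (auto simp: subsets_of_card_def card_insert_if dest: finite_subset)

lemma taylor_diff_nonzeroD:
  assumes "taylor_diff r g c T \<noteq> 0"
  shows "\<exists>j<r. j \<notin> T \<and> c (insert j T) \<noteq> 0"
proof -
  obtain j where "j \<in> {..<r} - T"
    "insertion_sign j T * set_monomial (\<Union>(g ` insert j T) - \<Union>(g ` T)) * c (insert j T) \<noteq> 0"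
    using assms unfolding taylor_diff_def by (rule sum.not_neutral_contains_not_neutral)
  then show ?thesis by auto
qed

lemma taylor_diff_chain_in: "chain_in r (Suc p) c \<Longrightarrow> chain_in r p (taylor_diff r g c)"
  by (auto simp: chain_in_def insert_in_subsets_of_card dest!: taylor_diff_nonzeroD)

lemma taylor_diff_chain_in_0:
  assumes "chain_in r 0 c"
  shows "taylor_diff r g c T = 0"
proof (rule ccontr)
  assume "taylor_diff r g c T \<noteq> 0"
  then obtain j where "c (insert j T) \<noteq> 0" by (blast dest: taylor_diff_nonzeroD)
  then have "insert j T \<subseteq> {..<r}" "card (insert j T) = 0"
    using assms by (auto simp: chain_in_def subsets_of_card_def)
  then show False by (meson card_0_eq finite_lessThan finite_subset insert_not_empty)
qed

text \<open>In multidegree \<open>\<alpha>\<close>, the simplex is contracted towards the first generator dividing \<open>x\<^sup>\<alpha>\<close>.\<close>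

definition taylor_homotopy ::
  "nat \<Rightarrow> (nat \<Rightarrow> 'v::finite set) \<Rightarrow> (nat set \<Rightarrow> ('v, 'k::comm_ring_1) mpoly) \<Rightarrow> ('v \<Rightarrow>\<^sub>0 nat) \<Rightarrow> nat set \<Rightarrow> 'k"
where
  "taylor_homotopy r g c \<alpha> =
     (if \<exists>j<r. g j \<subseteq> Poly_Mapping.keys \<alpha>
      then cone_homotopy (LEAST j. g j \<subseteq> Poly_Mapping.keys \<alpha>) (taylor_coeff g c \<alpha>) else (\<lambda>_. 0))"

lemma least_dividing_generator:
  fixes g :: "nat \<Rightarrow> 'v set"
  assumes "\<exists>j<r. g j \<subseteq> Poly_Mapping.keys \<alpha>"
  shows "(LEAST j. g j \<subseteq> Poly_Mapping.keys \<alpha>) < r" "g (LEAST j. g j \<subseteq> Poly_Mapping.keys \<alpha>) \<subseteq> Poly_Mapping.keys \<alpha>"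
proof -
  obtain j where "j < r" "g j \<subseteq> Poly_Mapping.keys \<alpha>" using assms by blast
  then show "(LEAST j. g j \<subseteq> Poly_Mapping.keys \<alpha>) < r" "g (LEAST j. g j \<subseteq> Poly_Mapping.keys \<alpha>) \<subseteq> Poly_Mapping.keys \<alpha>"
    using Least_le[of "\<lambda>j. g j \<subseteq> Poly_Mapping.keys \<alpha>" j] LeastI[of "\<lambda>j. g j \<subseteq> Poly_Mapping.keys \<alpha>" j]
    by simp_all
qed

lemma taylor_homotopy_nonzeroD:
  assumes "taylor_homotopy r g c \<alpha> S \<noteq> 0"
  shows "\<exists>j<r. j \<in> S \<and> g j \<subseteq> Poly_Mapping.keys \<alpha> \<and> taylor_coeff g c \<alpha> (S - {j}) \<noteq> 0"
proof -
  let ?j = "LEAST j. g j \<subseteq> Poly_Mapping.keys \<alpha>"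
  have ex: "\<exists>j<r. g j \<subseteq> Poly_Mapping.keys \<alpha>"
    using assms by (auto simp: taylor_homotopy_def split: if_splits)
  then have "?j \<in> S" "insertion_sign ?j (S - {?j}) * taylor_coeff g c \<alpha> (S - {?j}) \<noteq> 0"
    using assms by (auto simp: taylor_homotopy_def cone_homotopy_def split: if_splits)
  then show ?thesis using least_dividing_generator[OF ex] by (metis mult_zero_right)
qed

lemma exists_taylor_homotopy_chain: "\<exists>b. \<forall>\<alpha> S. taylor_coeff g b \<alpha> S = taylor_homotopy r g c \<alpha> S"
proof (rule exists_chain_taylor_coeff)
  show "finite {\<alpha>. taylor_homotopy r g c \<alpha> S \<noteq> 0}" for S
    by (rule finite_subset[of _ "\<Union>j<r. {\<alpha>. taylor_coeff g c \<alpha> (S - {j}) \<noteq> 0}"])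
      (auto dest!: taylor_homotopy_nonzeroD simp: finite_taylor_coeff_support)
  show "\<Union>(g ` S) \<subseteq> Poly_Mapping.keys \<alpha>" if nonzero: "taylor_homotopy r g c \<alpha> S \<noteq> 0" for \<alpha> S
  proof -
    obtain j where "j \<in> S" "g j \<subseteq> Poly_Mapping.keys \<alpha>" "\<Union>(g ` (S - {j})) \<subseteq> Poly_Mapping.keys \<alpha>"
      using taylor_homotopy_nonzeroD[OF nonzero] taylor_coeff_nonzeroD by blast
    then show ?thesis by blast
  qed
qed

lemma simplex_diff_taylor_homotopy:
  assumes cycle: "\<And>T. taylor_diff r g c T = 0"
    and covered: "\<And>S. taylor_coeff g c \<alpha> S \<noteq> 0 \<Longrightarrow> \<exists>j<r. g j \<subseteq> Poly_Mapping.keys \<alpha>"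
  shows "simplex_diff r (taylor_homotopy r g c \<alpha>) T = taylor_coeff g c \<alpha> T"
proof (cases "\<exists>j<r. g j \<subseteq> Poly_Mapping.keys \<alpha>")
  case True
  have "simplex_diff r (taylor_coeff g c \<alpha>) = (\<lambda>_. 0)"
    using cycle by (simp add: fun_eq_iff taylor_coeff_def flip: taylor_coeff_taylor_diff)
  then have "cone_homotopy (LEAST j. g j \<subseteq> Poly_Mapping.keys \<alpha>) (simplex_diff r (taylor_coeff g c \<alpha>)) T = 0"
    by (simp add: cone_homotopy_def)
  then show ?thesis
    using True least_dividing_generator(1)[OF True]
      simplex_diff_cone_homotopy[of "LEAST j. g j \<subseteq> Poly_Mapping.keys \<alpha>" r "taylor_coeff g c \<alpha>" T]
    by (simp add: taylor_homotopy_def)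
next
  case False
  then show ?thesis using covered[of T] by (auto simp: taylor_homotopy_def simplex_diff_def)
qed

lemma taylor_exact:
  fixes c :: "nat set \<Rightarrow> ('v::finite, 'k::comm_ring_1) mpoly"
  assumes c: "chain_in r p c" and cycle: "\<And>T. taylor_diff r g c T = 0"
    and covered: "\<And>\<alpha> S. taylor_coeff g c \<alpha> S \<noteq> 0 \<Longrightarrow> \<exists>j<r. g j \<subseteq> Poly_Mapping.keys \<alpha>"
  shows "\<exists>b. chain_in r (Suc p) b \<and> taylor_diff r g b = c"
proof -
  obtain b where b: "\<And>\<alpha> S. taylor_coeff g b \<alpha> S = taylor_homotopy r g c \<alpha> S"
    using exists_taylor_homotopy_chain by metis
  have "taylor_diff r g b = c"
  proof (rule ext, rule taylor_coeff_eqI[of g])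
    fix T \<alpha>
    show "taylor_coeff g (taylor_diff r g b) \<alpha> T = taylor_coeff g c \<alpha> T"
      using simplex_diff_taylor_homotopy[OF cycle covered]
      by (simp add: taylor_coeff_taylor_diff b[abs_def])
  qed
  moreover have "chain_in r (Suc p) b"
    unfolding chain_in_def
  proof (intro allI impI)
    fix S assume "b S \<noteq> 0"
    then obtain \<alpha> where "taylor_homotopy r g c \<alpha> S \<noteq> 0"
      using taylor_coeff_eqI[of g b S "\<lambda>_. 0"] by (auto simp: b)
    then obtain j where "j < r" "j \<in> S" "c (S - {j}) \<noteq> 0"
      using taylor_homotopy_nonzeroD taylor_coeff_nonzeroD by blast
    then show "S \<in> subsets_of_card r (Suc p)"
      using c insert_in_subsets_of_card[of j "S - {j}" r p] by (simp add: chain_in_def insert_absorb)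
  qed
  ultimately show ?thesis by blast
qed

lemma taylor_exact_pos:
  fixes c :: "nat set \<Rightarrow> ('v::finite, 'k::comm_ring_1) mpoly"
  assumes c: "chain_in r (Suc p) c" and cycle: "\<And>T. taylor_diff r g c T = 0"
  shows "\<exists>b. chain_in r (Suc (Suc p)) b \<and> taylor_diff r g b = c"
proof (rule taylor_exact[OF c cycle])
  fix \<alpha> S assume "taylor_coeff g c \<alpha> S \<noteq> 0"
  then have "c S \<noteq> 0" "\<Union>(g ` S) \<subseteq> Poly_Mapping.keys \<alpha>" by (auto dest: taylor_coeff_nonzeroD)
  moreover from \<open>c S \<noteq> 0\<close> have "S \<noteq> {}" "S \<subseteq> {..<r}"
    using c by (auto simp: chain_in_def subsets_of_card_def)
  ultimately show "\<exists>j<r. g j \<subseteq> Poly_Mapping.keys \<alpha>" by blast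
qed

section \<open>The Taylor resolution\<close>

definition is_ideal :: "'a::comm_ring_1 set \<Rightarrow> bool" where
  "is_ideal I \<longleftrightarrow> 0 \<in> I \<and> (\<forall>p\<in>I. \<forall>q\<in>I. p + q \<in> I) \<and> (\<forall>p\<in>I. \<forall>q. q * p \<in> I)"

lemma ideal_zero: "is_ideal I \<Longrightarrow> 0 \<in> I"
  by (simp add: is_ideal_def)

lemma ideal_add: "is_ideal I \<Longrightarrow> p \<in> I \<Longrightarrow> q \<in> I \<Longrightarrow> p + q \<in> I"
  by (simp add: is_ideal_def)

lemma ideal_mult: "is_ideal I \<Longrightarrow> p \<in> I \<Longrightarrow> q * p \<in> I"
  by (simp add: is_ideal_def)

lemma ideal_diff: "is_ideal I \<Longrightarrow> p \<in> I \<Longrightarrow> q \<in> I \<Longrightarrow> p - q \<in> I"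
  using ideal_add[of I p "(-1) * q"] ideal_mult[of I q "-1"] by simp

lemma ideal_sum: "is_ideal I \<Longrightarrow> (\<And>i. i \<in> A \<Longrightarrow> f i \<in> I) \<Longrightarrow> sum f A \<in> I"
  by (induction A rule: infinite_finite_induct) (simp_all add: ideal_zero ideal_add)

definition subset_enum :: "nat \<Rightarrow> nat \<Rightarrow> nat \<Rightarrow> nat set" where
  "subset_enum r i = (SOME h. bij_betw h {..<r choose i} (subsets_of_card r i))"

lemma bij_subset_enum: "bij_betw (subset_enum r i) {..<r choose i} (subsets_of_card r i)"
proof -
  have "finite (subsets_of_card r i)"
    by (rule finite_subset[of _ "Pow {..<r}"]) (auto simp: subsets_of_card_def)
  moreover have "card (subsets_of_card r i) = r choose i"
    using n_subsets[of "{..<r}" i] by (simp add: subsets_of_card_def)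
  ultimately have "\<exists>h. bij_betw h {..<r choose i} (subsets_of_card r i)"
    by (metis atLeast0LessThan ex_bij_betw_nat_finite)
  then show ?thesis unfolding subset_enum_def by (rule someI_ex)
qed

lemma subset_enum_inject: "k < r choose i \<Longrightarrow> l < r choose i \<Longrightarrow> subset_enum r i k = subset_enum r i l \<longleftrightarrow> k = l"
  using bij_subset_enum[of r i] by (auto simp: bij_betw_def dest: inj_onD)

lemma subset_enum_0: "subset_enum r 0 0 = {}"
proof -
  have "subset_enum r 0 0 \<in> subsets_of_card r 0"
    using bij_subset_enum[of r 0] by (auto simp: bij_betw_def)
  then show ?thesis by (auto simp: subsets_of_card_def dest: finite_subset)
qed

text \<open>The free module \<open>R\<^bsup>r choose i\<^esup>\<close> of the resolution is identified with the \<open>i\<close>-chains of the Taylor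
  complex, the basis vector \<open>k\<close> corresponding to \<open>e\<^sub>S\<close> for \<open>S = subset_enum r i k\<close>.\<close>

definition vec_to_chain :: "nat \<Rightarrow> nat \<Rightarrow> (nat \<Rightarrow> 'a::comm_ring_1) \<Rightarrow> nat set \<Rightarrow> 'a" where
  "vec_to_chain r i v S = (\<Sum>k<r choose i. v k * (if S = subset_enum r i k then 1 else 0))"

definition chain_to_vec :: "nat \<Rightarrow> nat \<Rightarrow> (nat set \<Rightarrow> 'a::zero) \<Rightarrow> nat \<Rightarrow> 'a" where
  "chain_to_vec r i c k = (if k < r choose i then c (subset_enum r i k) else 0)"

lemma vec_to_chain_subset_enum:
  "k < r choose i \<Longrightarrow> vec_to_chain r i v (subset_enum r i k) = v k"
  by (simp add: vec_to_chain_def subset_enum_inject if_distrib[of "(*) _"] cong: if_cong)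

lemma vec_to_chain_outside:
  "S \<notin> subsets_of_card r i \<Longrightarrow> vec_to_chain r i v S = 0"
  using bij_subset_enum[of r i] by (auto simp: vec_to_chain_def bij_betw_def intro!: sum.neutral)

lemma chain_in_vec_to_chain: "chain_in r i (vec_to_chain r i v)"
  using vec_to_chain_outside by (auto simp: chain_in_def)

lemma vec_in_chain_to_vec: "vec_in (r choose i) (chain_to_vec r i c)"
  by (simp add: vec_in_def chain_to_vec_def)

lemma chain_to_vec_to_chain: "vec_in (r choose i) v \<Longrightarrow> chain_to_vec r i (vec_to_chain r i v) = v"
  by (auto simp: fun_eq_iff chain_to_vec_def vec_in_def vec_to_chain_subset_enum)

lemma vec_to_chain_to_vec:
  assumes "chain_in r i c"
  shows "vec_to_chain r i (chain_to_vec r i c) = c"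
proof
  fix S
  show "vec_to_chain r i (chain_to_vec r i c) S = c S"
  proof (cases "S \<in> subsets_of_card r i")
    case True
    then obtain k where "k < r choose i" "S = subset_enum r i k"
      using bij_subset_enum[of r i] by (auto simp: bij_betw_def)
    then show ?thesis by (simp add: vec_to_chain_subset_enum chain_to_vec_def)
  next
    case False
    then show ?thesis using assms by (auto simp: vec_to_chain_outside chain_in_def)
  qed
qed

lemma chain_to_vec_eq_0_iff:
  fixes c :: "nat set \<Rightarrow> 'a::comm_ring_1"
  assumes "chain_in r i c"
  shows "chain_to_vec r i c = (\<lambda>_. 0) \<longleftrightarrow> c = (\<lambda>_. 0)"
proof
  assume "chain_to_vec r i c = (\<lambda>_. 0)"
  then have "c = vec_to_chain r i (\<lambda>_. 0)" using vec_to_chain_to_vec[OF assms] by simp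
  then show "c = (\<lambda>_. 0)" by (simp add: vec_to_chain_def fun_eq_iff)
qed (simp add: chain_to_vec_def fun_eq_iff)

definition taylor_matrix ::
  "nat \<Rightarrow> (nat \<Rightarrow> 'v::finite set) \<Rightarrow> nat \<Rightarrow> nat \<Rightarrow> nat \<Rightarrow> ('v, 'k::comm_ring_1) mpoly"
where
  "taylor_matrix r g i row col =
     taylor_diff r g (\<lambda>S. if S = subset_enum r i col then 1 else 0) (subset_enum r (i - 1) row)"

lemma lmap_taylor_matrix:
  "lmap (r choose i) (r choose Suc i) (taylor_matrix r g (Suc i)) v =
    chain_to_vec r i (taylor_diff r g (vec_to_chain r (Suc i) v))"
  unfolding vec_to_chain_def taylor_diff_sum
  by (simp add: fun_eq_iff lmap_def chain_to_vec_def taylor_matrix_def mult.commute)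

lemma taylor_image_iff:
  assumes v: "vec_in (r choose i) v"
  shows "(\<exists>w. vec_in (r choose Suc i) w \<and> v = lmap (r choose i) (r choose Suc i) (taylor_matrix r g (Suc i)) w)
    \<longleftrightarrow> (\<exists>b. chain_in r (Suc i) b \<and> taylor_diff r g b = vec_to_chain r i v)"
proof
  assume "\<exists>w. vec_in (r choose Suc i) w \<and> v = lmap (r choose i) (r choose Suc i) (taylor_matrix r g (Suc i)) w"
  then obtain w where "v = chain_to_vec r i (taylor_diff r g (vec_to_chain r (Suc i) w))"
    by (auto simp: lmap_taylor_matrix)
  then show "\<exists>b. chain_in r (Suc i) b \<and> taylor_diff r g b = vec_to_chain r i v"
    using chain_in_vec_to_chain taylor_diff_chain_in vec_to_chain_to_vec by metis
next
  assume "\<exists>b. chain_in r (Suc i) b \<and> taylor_diff r g b = vec_to_chain r i v"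
  then obtain b where "chain_in r (Suc i) b" "taylor_diff r g b = vec_to_chain r i v" by blast
  then have "lmap (r choose i) (r choose Suc i) (taylor_matrix r g (Suc i)) (chain_to_vec r (Suc i) b) =
      chain_to_vec r i (vec_to_chain r i v)"
    by (simp add: lmap_taylor_matrix vec_to_chain_to_vec)
  then have "v = lmap (r choose i) (r choose Suc i) (taylor_matrix r g (Suc i)) (chain_to_vec r (Suc i) b)"
    by (simp add: chain_to_vec_to_chain v)
  then show "\<exists>w. vec_in (r choose Suc i) w \<and> v = lmap (r choose i) (r choose Suc i) (taylor_matrix r g (Suc i)) w"
    using vec_in_chain_to_vec by blast
qed

lemma taylor_diff_empty_in_ideal:
  assumes "is_ideal I" "\<And>j. j < r \<Longrightarrow> set_monomial (g j) \<in> I"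
  shows "taylor_diff r g b {} \<in> I"
  unfolding taylor_diff_def
proof (rule ideal_sum[OF assms(1)])
  fix j assume "j \<in> {..<r} - {}"
  then show "insertion_sign j {} * set_monomial (\<Union>(g ` insert j {}) - \<Union>(g ` {})) * b (insert j {}) \<in> I"
    using ideal_mult[OF assms(1) assms(2), of j "insertion_sign j {} * b {j}"] by (simp add: ac_simps)
qed

lemma taylor_boundary_iff_cycle:
  fixes c :: "nat set \<Rightarrow> ('v::finite, 'k::comm_ring_1) mpoly"
  assumes "chain_in r (Suc p) c"
  shows "(\<exists>b. chain_in r (Suc (Suc p)) b \<and> taylor_diff r g b = c) \<longleftrightarrow> taylor_diff r g c = (\<lambda>_. 0)"
proof
  assume "\<exists>b. chain_in r (Suc (Suc p)) b \<and> taylor_diff r g b = c"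
  then obtain b where b: "c = taylor_diff r g b" by metis
  show "taylor_diff r g c = (\<lambda>_. 0)" unfolding b by (simp add: fun_eq_iff taylor_diff_twice)
next
  assume "taylor_diff r g c = (\<lambda>_. 0)"
  then show "\<exists>b. chain_in r (Suc (Suc p)) b \<and> taylor_diff r g b = c"
    using taylor_exact_pos[OF assms] by (simp add: fun_eq_iff)
qed

lemma taylor_boundary_iff_in_ideal:
  fixes c :: "nat set \<Rightarrow> ('v::finite, 'k::comm_ring_1) mpoly"
  assumes c: "chain_in r 0 c" and I: "is_ideal I" and gens: "\<And>j. j < r \<Longrightarrow> set_monomial (g j) \<in> I"
    and covered: "\<And>p \<alpha>. p \<in> I \<Longrightarrow> Poly_Mapping.lookup p \<alpha> \<noteq> 0 \<Longrightarrow> \<exists>j<r. g j \<subseteq> Poly_Mapping.keys \<alpha>"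
  shows "(\<exists>b. chain_in r (Suc 0) b \<and> taylor_diff r g b = c) \<longleftrightarrow> c {} \<in> I"
proof
  assume "\<exists>b. chain_in r (Suc 0) b \<and> taylor_diff r g b = c"
  then obtain b where "c {} = taylor_diff r g b {}" by metis
  then show "c {} \<in> I" using taylor_diff_empty_in_ideal[of I r g b, OF I gens] by simp
next
  assume "c {} \<in> I"
  have c_empty: "c S = 0" if "S \<noteq> {}" for S
    using c that finite_subset[of S "{..<r}"] by (auto simp: chain_in_def subsets_of_card_def)
  show "\<exists>b. chain_in r (Suc 0) b \<and> taylor_diff r g b = c"
  proof (rule taylor_exact[OF c])
    show "taylor_diff r g c T = 0" for T by (rule taylor_diff_chain_in_0[OF c])
    show "\<exists>j<r. g j \<subseteq> Poly_Mapping.keys \<alpha>" if "taylor_coeff g c \<alpha> S \<noteq> 0" for \<alpha> S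
      using that covered[OF \<open>c {} \<in> I\<close>] c_empty[of S]
      by (cases "S = {}") (auto simp: taylor_coeff_def set_monomial_empty)
  qed
qed

theorem taylor_free_resolution:
  fixes I :: "('v::finite, 'k::comm_ring_1) mpoly set"
  assumes I: "is_ideal I" and gens: "\<And>j. j < r \<Longrightarrow> set_monomial (g j) \<in> I"
    and covered: "\<And>p \<alpha>. p \<in> I \<Longrightarrow> Poly_Mapping.lookup p \<alpha> \<noteq> 0 \<Longrightarrow> \<exists>j<r. g j \<subseteq> Poly_Mapping.keys \<alpha>"
  shows "free_resolution I r (\<lambda>i. r choose i) (taylor_matrix r g) (\<lambda>_. 1)"
  unfolding free_resolution_def
proof (intro conjI allI impI)
  show "r choose Suc r = 0" by simp
  show "\<exists>v. vec_in (r choose 0) v \<and> (\<Sum>j<r choose 0. v j * 1) - 1 \<in> I"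
    by (rule exI[of _ "\<lambda>j. if j = 0 then 1 else 0"]) (simp add: vec_in_def ideal_zero[OF I])
next
  fix v :: "nat \<Rightarrow> ('v, 'k) mpoly"
  assume v: "vec_in (r choose 0) v"
  have "vec_to_chain r 0 v {} = v 0" by (simp add: vec_to_chain_def subset_enum_0)
  then show "(\<Sum>j<r choose 0. v j * 1) \<in> I \<longleftrightarrow>
      (\<exists>w. vec_in (r choose 1) w \<and> v = lmap (r choose 0) (r choose 1) (taylor_matrix r g 1) w)"
    unfolding One_nat_def taylor_image_iff[OF v]
    using taylor_boundary_iff_in_ideal[OF chain_in_vec_to_chain I gens covered] by simp
next
  fix i and v :: "nat \<Rightarrow> ('v, 'k) mpoly"
  assume "1 \<le> i \<and> i \<le> r" and v: "vec_in (r choose i) v"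
  then obtain p where p: "i = Suc p" by (cases i) auto
  have "lmap (r choose (i - 1)) (r choose i) (taylor_matrix r g i) v = (\<lambda>_. 0) \<longleftrightarrow>
      taylor_diff r g (vec_to_chain r i v) = (\<lambda>_. 0)"
    unfolding p diff_Suc_1 lmap_taylor_matrix
    by (rule chain_to_vec_eq_0_iff[OF taylor_diff_chain_in[OF chain_in_vec_to_chain]])
  also have "\<dots> \<longleftrightarrow> (\<exists>w. vec_in (r choose Suc i) w \<and> v = lmap (r choose i) (r choose Suc i) (taylor_matrix r g (Suc i)) w)"
    using taylor_image_iff[OF v] taylor_boundary_iff_cycle[OF chain_in_vec_to_chain[of r "Suc p" v]]
    unfolding p by simp
  finally show "lmap (r choose (i - 1)) (r choose i) (taylor_matrix r g i) v = (\<lambda>_. 0) \<longleftrightarrow>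
      (\<exists>w. vec_in (r choose Suc i) w \<and> v = lmap (r choose i) (r choose Suc i) (taylor_matrix r g (Suc i)) w)" .
qed

section \<open>Edge ideals\<close>

lemma edge_ideal_is_ideal:
  fixes E :: "'v::finite \<Rightarrow> 'v \<Rightarrow> bool"
  shows "is_ideal (edge_ideal E :: ('v, 'k::field) mpoly set)"
  unfolding is_ideal_def
proof (intro conjI ballI allI)
  let ?gen = "\<lambda>c :: 'v \<times> 'v \<Rightarrow> ('v, 'k) mpoly. \<Sum>e\<in>{(i, j). E i j}. c e * var (fst e) * var (snd e)"
  have gen: "?gen c \<in> edge_ideal E" for c unfolding edge_ideal_def by blast
  show "(0 :: ('v, 'k) mpoly) \<in> edge_ideal E" using gen[of "\<lambda>_. 0"] by simp
  fix p q :: "('v, 'k) mpoly" assume "p \<in> edge_ideal E"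
  then obtain c where c: "p = ?gen c" unfolding edge_ideal_def by blast
  show "q * p \<in> edge_ideal E"
    using gen[of "\<lambda>e. q * c e"] by (simp add: c sum_distrib_left mult.assoc)
  assume "q \<in> edge_ideal E"
  then obtain c' where c': "q = ?gen c'" unfolding edge_ideal_def by blast
  show "p + q \<in> edge_ideal E"
    using gen[of "\<lambda>e. c e + c' e"] by (simp add: c c' sum.distrib distrib_right)
qed

lemma edge_monomial_in_edge_ideal: "E u v \<Longrightarrow> var u * var v \<in> edge_ideal E"
  unfolding edge_ideal_def
  by (rule CollectI, rule exI[of _ "\<lambda>e. if e = (u, v) then 1 else 0"])
    (simp add: if_distrib[of "\<lambda>x. x * _"] cong: if_cong)

lemma edge_ideal_support:
  assumes "simple_graph E" "p \<in> edge_ideal E" "Poly_Mapping.lookup p \<alpha> \<noteq> 0"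
  shows "\<exists>u v. E u v \<and> {u, v} \<subseteq> Poly_Mapping.keys \<alpha>"
proof -
  obtain c where "p = (\<Sum>e\<in>{(i, j). E i j}. c e * var (fst e) * var (snd e))"
    using assms(2) unfolding edge_ideal_def by blast
  then have "(\<Sum>e\<in>{(i, j). E i j}. Poly_Mapping.lookup (c e * var (fst e) * var (snd e)) \<alpha>) \<noteq> 0"
    using assms(3) by (simp add: lookup_sum)
  then obtain u v where uv: "E u v" "Poly_Mapping.lookup (c (u, v) * var u * var v) \<alpha> \<noteq> 0"
    by (auto elim: sum.not_neutral_contains_not_neutral)
  then have "u \<noteq> v" using assms(1) by (auto simp: simple_graph_def)
  then have "c (u, v) * var u * var v = set_monomial {u, v} * c (u, v)"
    by (simp add: var_mult_var[symmetric] ac_simps)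
  then have "Poly_Mapping.lookup (set_monomial {u, v} * c (u, v)) \<alpha> \<noteq> 0"
    using uv(2) by simp
  then show ?thesis using uv(1) by (auto simp: lookup_set_monomial_mult split: if_splits)
qed

lemma lookup_edge_ideal_var:
  assumes "simple_graph E" "p \<in> edge_ideal E"
  shows "Poly_Mapping.lookup p (Poly_Mapping.single v 1) = 0"
  using edge_ideal_support[OF assms] assms(1) by (force simp: simple_graph_def)

lemma edge_ideal_free_resolution:
  fixes E :: "'v::finite \<Rightarrow> 'v \<Rightarrow> bool"
  assumes "simple_graph E"
  shows "\<exists>n bs d e. free_resolution (edge_ideal E :: ('v, 'k::field) mpoly set) n bs d e"
proof -
  define r where "r = card {(u, v). E u v}"
  obtain edge where edge: "bij_betw edge {..<r} {(u, v). E u v}"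
    using ex_bij_betw_nat_finite[of "{(u, v). E u v}"] by (auto simp: r_def atLeast0LessThan)
  define g where "g j = {fst (edge j), snd (edge j)}" for j
  have edge_j: "E (fst (edge j)) (snd (edge j))" if "j < r" for j
    using edge that by (auto simp: bij_betw_def)
  have "free_resolution (edge_ideal E :: ('v, 'k) mpoly set) r (\<lambda>i. r choose i) (taylor_matrix r g) (\<lambda>_. 1)"
  proof (rule taylor_free_resolution[OF edge_ideal_is_ideal])
    fix j assume "j < r"
    then show "set_monomial (g j) \<in> edge_ideal E"
      using edge_j[of j] assms edge_monomial_in_edge_ideal
      by (metis g_def simple_graph_def var_mult_var)
  next
    fix p :: "('v, 'k) mpoly" and \<alpha> assume "p \<in> edge_ideal E" "Poly_Mapping.lookup p \<alpha> \<noteq> 0"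
    then obtain u v where "E u v" "{u, v} \<subseteq> Poly_Mapping.keys \<alpha>"
      using edge_ideal_support[OF assms] by blast
    moreover from \<open>E u v\<close> obtain j where "j < r" "edge j = (u, v)"
      using edge by (force simp: bij_betw_def)
    ultimately show "\<exists>j<r. g j \<subseteq> Poly_Mapping.keys \<alpha>" by (auto simp: g_def)
  qed
  then show ?thesis by blast
qed

lemma pd_free_resolution:
  fixes E :: "'v::finite \<Rightarrow> 'v \<Rightarrow> bool"
  assumes "simple_graph E"
  shows "\<exists>bs d e. free_resolution (edge_ideal E :: ('v, 'k::field) mpoly set) (pd TYPE('k) E) bs d e"
  unfolding pd_def by (rule LeastI_ex) (rule edge_ideal_free_resolution[OF assms])

section \<open>Comparing the Taylor complex with a free resolution\<close>

text \<open>Elements of \<open>F\<^sub>j \<otimes> T\<^sub>p\<close>, for a free module \<open>F\<^sub>j = R\<^bsup>b\<^esup>\<close> and the Taylor complex \<open>T\<close>, are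
  chains \<open>X\<close> with vector coefficients \<open>X S\<close>; the two differentials act on the two indices.\<close>

definition taylor_diff_vec ::
  "nat \<Rightarrow> (nat \<Rightarrow> 'v::finite set) \<Rightarrow> (nat set \<Rightarrow> nat \<Rightarrow> ('v, 'k::comm_ring_1) mpoly) \<Rightarrow> nat set \<Rightarrow> nat \<Rightarrow> ('v, 'k) mpoly"
where
  "taylor_diff_vec r g X T k = taylor_diff r g (\<lambda>S. X S k) T"

definition lmap_chain ::
  "nat \<Rightarrow> nat \<Rightarrow> (nat \<Rightarrow> nat \<Rightarrow> 'a::comm_ring_1) \<Rightarrow> (nat set \<Rightarrow> nat \<Rightarrow> 'a) \<Rightarrow> nat set \<Rightarrow> nat \<Rightarrow> 'a"
where
  "lmap_chain a b M X S = lmap a b M (X S)"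

definition vchain_in :: "nat \<Rightarrow> nat \<Rightarrow> (nat set \<Rightarrow> nat \<Rightarrow> 'a::zero) \<Rightarrow> bool" where
  "vchain_in r p X \<longleftrightarrow> (\<forall>k. chain_in r p (\<lambda>S. X S k))"

lemma lmap_vec_in: "vec_in a (lmap a b M v)"
  by (simp add: lmap_def vec_in_def)

lemma taylor_diff_vec_diff: "taylor_diff_vec r g (X - Y) = taylor_diff_vec r g X - taylor_diff_vec r g Y"
  by (simp add: fun_eq_iff taylor_diff_vec_def taylor_diff_diff)

lemma lmap_chain_add: "lmap_chain a b M (X + Y) = lmap_chain a b M X + lmap_chain a b M Y"
  by (simp add: fun_eq_iff lmap_chain_def lmap_def algebra_simps sum.distrib)

lemma taylor_diff_vec_lmap_chain:
  "taylor_diff_vec r g (lmap_chain a b M X) = lmap_chain a b M (taylor_diff_vec r g X)"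
proof (intro ext)
  fix T k
  show "taylor_diff_vec r g (lmap_chain a b M X) T k = lmap_chain a b M (taylor_diff_vec r g X) T k"
    using taylor_diff_sum[where a="M k" and f="\<lambda>c S. X S c" and C="{..<b}"]
    by (simp add: taylor_diff_vec_def lmap_chain_def lmap_def)
qed

lemma taylor_diff_vec_twice: "taylor_diff_vec r g (taylor_diff_vec r g X) = 0"
  by (simp add: fun_eq_iff taylor_diff_vec_def taylor_diff_twice)

lemma vchain_in_taylor_diff_vec: "vchain_in r (Suc p) X \<Longrightarrow> vchain_in r p (taylor_diff_vec r g X)"
  by (simp add: vchain_in_def taylor_diff_vec_def taylor_diff_chain_in)

lemma vchain_in_lmap_chain:
  assumes "vchain_in r p X"
  shows "vchain_in r p (lmap_chain a b M X)"
  unfolding vchain_in_def chain_in_def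
proof (intro allI impI)
  fix k S assume "lmap_chain a b M X S k \<noteq> 0"
  then obtain c where "M k c * X S c \<noteq> 0"
    by (auto simp: lmap_chain_def lmap_def split: if_splits elim: sum.not_neutral_contains_not_neutral)
  then have "X S c \<noteq> 0" by (metis mult_zero_right)
  then show "S \<in> subsets_of_card r p" using assms by (auto simp: vchain_in_def chain_in_def)
qed

lemma vchain_in_diff:
  fixes X Y :: "nat set \<Rightarrow> nat \<Rightarrow> 'a::ab_group_add"
  assumes "vchain_in r p X" "vchain_in r p Y"
  shows "vchain_in r p (X - Y)"
  unfolding vchain_in_def chain_in_def
proof (intro allI impI)
  fix k S assume "(X - Y) S k \<noteq> 0"
  then have "X S k \<noteq> 0 \<or> Y S k \<noteq> 0" by auto
  then show "S \<in> subsets_of_card r p" using assms by (auto simp: vchain_in_def chain_in_def)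
qed

lemma vchain_in_mult:
  fixes z :: "nat set \<Rightarrow> 'a::comm_ring_1"
  shows "chain_in r p z \<Longrightarrow> vchain_in r p (\<lambda>S k. z S * u k)"
  unfolding vchain_in_def chain_in_def by (metis mult_zero_left)

lemma chain_in_vec_combination:
  fixes Y :: "nat set \<Rightarrow> nat \<Rightarrow> 'a::comm_ring_1"
  assumes "vchain_in r p Y"
  shows "chain_in r p (\<lambda>S. \<Sum>k<b. Y S k * e k)"
  unfolding chain_in_def
proof (intro allI impI)
  fix S assume "(\<Sum>k<b. Y S k * e k) \<noteq> 0"
  then obtain k where "k \<in> {..<b}" "Y S k * e k \<noteq> 0" by (rule sum.not_neutral_contains_not_neutral)
  then have "Y S k \<noteq> 0" by (metis mult_zero_left)
  then show "S \<in> subsets_of_card r p" using assms by (auto simp: vchain_in_def chain_in_def)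
qed

lemma taylor_exact_vec:
  fixes X :: "nat set \<Rightarrow> nat \<Rightarrow> ('v::finite, 'k::comm_ring_1) mpoly"
  assumes "vchain_in r (Suc p) X" "\<forall>S. vec_in b (X S)" "taylor_diff_vec r g X = 0"
  shows "\<exists>Y. vchain_in r (Suc (Suc p)) Y \<and> (\<forall>S. vec_in b (Y S)) \<and> taylor_diff_vec r g Y = X"
proof -
  have "\<forall>k. \<exists>y. chain_in r (Suc (Suc p)) y \<and> taylor_diff r g y = (\<lambda>S. X S k)"
    using assms(1,3) by (intro allI taylor_exact_pos) (simp_all add: vchain_in_def taylor_diff_vec_def fun_eq_iff)
  then obtain y where y: "\<And>k. chain_in r (Suc (Suc p)) (y k)" "\<And>k. taylor_diff r g (y k) = (\<lambda>S. X S k)"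
    by metis
  define Y where "Y S k = (if k < b then y k S else 0)" for S k
  have "vchain_in r (Suc (Suc p)) Y"
    using y(1) by (auto simp: vchain_in_def chain_in_def Y_def)
  moreover have "taylor_diff_vec r g Y = X"
  proof (intro ext)
    fix T k
    show "taylor_diff_vec r g Y T k = X T k"
    proof (cases "k < b")
      case True
      then show ?thesis using y(2)[of k] by (simp add: taylor_diff_vec_def Y_def)
    next
      case False
      then show ?thesis using assms(2) by (simp add: taylor_diff_vec_def Y_def vec_in_def)
    qed
  qed
  ultimately show ?thesis by (auto simp: vec_in_def Y_def)
qed

lemma lift_through_lmap:
  assumes lift: "\<And>T. \<exists>w. vec_in b w \<and> W T = lmap a b M w" and W: "vchain_in r p W"
  shows "\<exists>X. vchain_in r p X \<and> (\<forall>S. vec_in b (X S)) \<and> W = lmap_chain a b M X"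
proof -
  define X where "X T = (if W T = (\<lambda>_. 0) then (\<lambda>_. 0) else (SOME w. vec_in b w \<and> W T = lmap a b M w))"
    for T
  have X: "vec_in b (X T) \<and> W T = lmap a b M (X T)" for T
  proof (cases "W T = (\<lambda>_. 0)")
    case True
    then show ?thesis by (simp add: X_def vec_in_def lmap_def fun_eq_iff)
  next
    case False
    then show ?thesis using someI_ex[OF lift[of T]] by (simp add: X_def)
  qed
  have "vchain_in r p X"
    unfolding vchain_in_def chain_in_def
  proof (intro allI impI)
    fix k T assume "X T k \<noteq> 0"
    then have "W T \<noteq> (\<lambda>_. 0)" by (auto simp: X_def)
    then obtain k' where "W T k' \<noteq> 0" by auto
    then show "T \<in> subsets_of_card r p" using W by (auto simp: vchain_in_def chain_in_def)
  qed
  with X show ?thesis by (intro exI[of _ X]) (auto simp: lmap_chain_def)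
qed

definition resolution_cycle ::
  "'a::comm_ring_1 set \<Rightarrow> (nat \<Rightarrow> nat) \<Rightarrow> (nat \<Rightarrow> nat \<Rightarrow> nat \<Rightarrow> 'a) \<Rightarrow> (nat \<Rightarrow> 'a) \<Rightarrow> nat \<Rightarrow> (nat \<Rightarrow> 'a) \<Rightarrow> bool"
where
  "resolution_cycle I bs d e j v \<longleftrightarrow>
     (if j = 0 then (\<Sum>k<bs 0. v k * e k) \<in> I else lmap (bs (j - 1)) (bs j) (d j) v = (\<lambda>_. 0))"

lemma free_resolution_exact:
  assumes "free_resolution I n bs d e" "j \<le> n" "vec_in (bs j) v"
  shows "resolution_cycle I bs d e j v \<longleftrightarrow>
    (\<exists>w. vec_in (bs (Suc j)) w \<and> v = lmap (bs j) (bs (Suc j)) (d (Suc j)) w)"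
proof (cases j)
  case 0
  then show ?thesis using assms(1,3) by (simp add: free_resolution_def resolution_cycle_def)
next
  case (Suc i)
  have j: "1 \<le> j \<and> j \<le> n" using Suc assms(2) by simp
  have exact: "\<forall>i. 1 \<le> i \<and> i \<le> n \<longrightarrow> (\<forall>v. vec_in (bs i) v \<longrightarrow>
      (lmap (bs (i - 1)) (bs i) (d i) v = (\<lambda>_. 0) \<longleftrightarrow>
       (\<exists>w. vec_in (bs (Suc i)) w \<and> v = lmap (bs i) (bs (Suc i)) (d (Suc i)) w)))"
    using assms(1) unfolding free_resolution_def by blast
  have "lmap (bs (j - 1)) (bs j) (d j) v = (\<lambda>_. 0) \<longleftrightarrow>
      (\<exists>w. vec_in (bs (Suc j)) w \<and> v = lmap (bs j) (bs (Suc j)) (d (Suc j)) w)"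
    using exact[rule_format, OF j assms(3)] .
  then show ?thesis using Suc by (simp add: resolution_cycle_def)
qed

lemma resolution_cycle_lmap:
  assumes "free_resolution I n bs d e" "j \<le> n" "vec_in (bs (Suc j)) w"
  shows "resolution_cycle I bs d e j (lmap (bs j) (bs (Suc j)) (d (Suc j)) w)"
  using free_resolution_exact[OF assms(1,2) lmap_vec_in] assms(3) by blast

lemma lift_taylor_cycle:
  fixes X :: "nat set \<Rightarrow> nat \<Rightarrow> ('v::finite, 'k::comm_ring_1) mpoly"
  assumes FR: "free_resolution I n bs d e" and "j \<le> n" and X: "vchain_in r (Suc p) X" "\<forall>S. vec_in (bs j) (X S)"
    and cycle: "\<forall>T. resolution_cycle I bs d e j (taylor_diff_vec r g X T)"
  obtains X' where "vchain_in r p X'" "\<forall>S. vec_in (bs (Suc j)) (X' S)"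
    "taylor_diff_vec r g X = lmap_chain (bs j) (bs (Suc j)) (d (Suc j)) X'"
proof -
  have "\<exists>w. vec_in (bs (Suc j)) w \<and> taylor_diff_vec r g X T = lmap (bs j) (bs (Suc j)) (d (Suc j)) w" for T
    using free_resolution_exact[OF FR \<open>j \<le> n\<close>] X(2) cycle by (simp add: vec_in_def taylor_diff_vec_def)
  moreover have "vchain_in r p (taylor_diff_vec r g X)"
    using X(1) by (rule vchain_in_taylor_diff_vec)
  ultimately show ?thesis using that lift_through_lmap by metis
qed

lemma free_resolution_taylor_chase:
  fixes X :: "nat set \<Rightarrow> nat \<Rightarrow> ('v::finite, 'k::comm_ring_1) mpoly"
  assumes FR: "free_resolution I n bs d e"
  shows "j \<le> n \<Longrightarrow> n - j < p \<Longrightarrow> vchain_in r p X \<Longrightarrow> \<forall>S. vec_in (bs j) (X S) \<Longrightarrow>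
    \<forall>T. resolution_cycle I bs d e j (taylor_diff_vec r g X T) \<Longrightarrow>
    \<exists>Y Z. vchain_in r (Suc p) Y \<and> (\<forall>S. vec_in (bs j) (Y S)) \<and>
      vchain_in r p Z \<and> (\<forall>S. vec_in (bs (Suc j)) (Z S)) \<and>
      X = taylor_diff_vec r g Y + lmap_chain (bs j) (bs (Suc j)) (d (Suc j)) Z"
proof (induction "n - j" arbitrary: j p X)
  case 0
  obtain p' where p: "p = Suc p'" using "0.prems"(2) by (cases p) auto
  obtain X' where "taylor_diff_vec r g X = lmap_chain (bs j) (bs (Suc j)) (d (Suc j)) X'"
    using lift_taylor_cycle[OF FR "0.prems"(1) "0.prems"(3)[unfolded p] "0.prems"(4,5)] by blast
  moreover have "bs (Suc j) = 0" using FR "0" by (simp add: free_resolution_def)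
  ultimately have "taylor_diff_vec r g X = 0" by (simp add: fun_eq_iff lmap_chain_def lmap_def)
  then obtain Y where "vchain_in r (Suc p) Y" "\<forall>S. vec_in (bs j) (Y S)" "taylor_diff_vec r g Y = X"
    using taylor_exact_vec[of r p' X "bs j" g] "0.prems"(3,4) p by auto
  then show ?case
    by (intro exI[of _ Y] exI[of _ 0])
      (simp add: vchain_in_def chain_in_def vec_in_def lmap_chain_def lmap_def fun_eq_iff)
next
  case (Suc k)
  obtain p' where p: "p = Suc p'" using Suc.prems(2) by (cases p) auto
  let ?D = "lmap_chain (bs j) (bs (Suc j)) (d (Suc j))"
  let ?D' = "lmap_chain (bs (Suc j)) (bs (Suc (Suc j))) (d (Suc (Suc j)))"
  obtain X' where X': "vchain_in r p' X'" "\<forall>S. vec_in (bs (Suc j)) (X' S)" "taylor_diff_vec r g X = ?D X'"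
    using lift_taylor_cycle[OF FR Suc.prems(1) Suc.prems(3)[unfolded p] Suc.prems(4,5)] by blast
  have "?D (taylor_diff_vec r g X') = 0"
    using X'(3)[symmetric] by (simp add: taylor_diff_vec_twice flip: taylor_diff_vec_lmap_chain)
  then have "\<forall>T. resolution_cycle I bs d e (Suc j) (taylor_diff_vec r g X' T)"
    by (simp add: resolution_cycle_def lmap_chain_def fun_eq_iff)
  moreover have "k = n - Suc j" "Suc j \<le> n" "n - Suc j < p'"
    using Suc.hyps(2) Suc.prems(2) p by simp_all
  ultimately obtain Y' Z' where Y': "vchain_in r p Y'" "\<forall>S. vec_in (bs (Suc j)) (Y' S)"
      and X'_eq: "X' = taylor_diff_vec r g Y' + ?D' Z'" and Z': "\<forall>S. vec_in (bs (Suc (Suc j))) (Z' S)"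
    using Suc.hyps(1)[of "Suc j" p' X'] X'(1,2) p by blast
  \<comment> \<open>\<open>X - D Y'\<close> is a Taylor cycle, as \<open>D (D Z') = 0\<close> in the resolution.\<close>
  have "?D (?D' Z') = 0"
    using resolution_cycle_lmap[OF FR, of "Suc j"] \<open>Suc j \<le> n\<close> Z'
    by (simp add: fun_eq_iff lmap_chain_def resolution_cycle_def)
  then have "taylor_diff_vec r g (X - ?D Y') = 0"
    using X'(3) X'_eq by (simp add: taylor_diff_vec_diff taylor_diff_vec_lmap_chain lmap_chain_add)
  moreover have "vchain_in r p (X - ?D Y')"
    using Suc.prems(3) Y'(1) by (simp add: vchain_in_diff vchain_in_lmap_chain)
  moreover have "\<forall>S. vec_in (bs j) ((X - ?D Y') S)"
    using Suc.prems(4) by (simp add: vec_in_def lmap_chain_def lmap_def)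
  ultimately obtain Y where "vchain_in r (Suc p) Y" "\<forall>S. vec_in (bs j) (Y S)" "taylor_diff_vec r g Y = X - ?D Y'"
    using taylor_exact_vec[of r p' "X - ?D Y'" "bs j" g] p by auto
  then show ?case using Y' by (intro exI[of _ Y] exI[of _ Y']) (simp add: algebra_simps)
qed

text \<open>If \<open>R/I\<close> has a free resolution of length \<open>n\<close>, then the Taylor complex tensored with \<open>R/I\<close>
  has no homology above degree \<open>n\<close>: both compute \<open>Tor(R/I, R/(x\<^bsup>g 0\<^esup>, \<dots>))\<close>.\<close>

theorem taylor_cycle_mod_ideal_is_boundary:
  fixes z :: "nat set \<Rightarrow> ('v::finite, 'k::comm_ring_1) mpoly"
  assumes I: "is_ideal I" and FR: "free_resolution I n bs d e" and "n < m"
    and z: "chain_in r m z" and cycle: "\<And>T. taylor_diff r g z T \<in> I"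
  shows "\<exists>y. chain_in r (Suc m) y \<and> (\<forall>S. z S - taylor_diff r g y S \<in> I)"
proof -
  define aug where "aug v = (\<Sum>k<bs 0. v k * e k)" for v
  obtain u where u: "vec_in (bs 0) u" "aug u - 1 \<in> I"
    using FR by (auto simp: free_resolution_def aug_def)
  have aug_taylor_diff_vec: "aug (taylor_diff_vec r g Y T) = taylor_diff r g (\<lambda>S. aug (Y S)) T" for Y T
    using taylor_diff_sum[where a=e and f="\<lambda>k S. Y S k" and C="{..<bs 0}"]
    by (simp add: aug_def taylor_diff_vec_def mult.commute)
  define X where "X S k = z S * u k" for S k
  have aug_X: "aug (X S) = aug u * z S" for S
    by (simp add: aug_def X_def sum_distrib_left ac_simps)
  have "\<forall>T. resolution_cycle I bs d e 0 (taylor_diff_vec r g X T)"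
    using ideal_mult[OF I cycle] by (simp add: resolution_cycle_def taylor_diff_scale aug_X
        aug_taylor_diff_vec flip: aug_def)
  moreover have "vchain_in r m X"
    using z unfolding X_def by (rule vchain_in_mult)
  moreover have "\<forall>S. vec_in (bs 0) (X S)"
    using u(1) by (simp add: vec_in_def X_def)
  ultimately obtain Y Z where Y: "vchain_in r (Suc m) Y" and Z: "\<forall>S. vec_in (bs 1) (Z S)"
    and X: "X = taylor_diff_vec r g Y + lmap_chain (bs 0) (bs 1) (d 1) Z"
    using free_resolution_taylor_chase[OF FR, of 0 m r X g] \<open>n < m\<close> by auto
  define y where "y S = aug (Y S)" for S
  have "chain_in r (Suc m) y"
    unfolding y_def aug_def using Y by (rule chain_in_vec_combination)
  moreover have "z S - taylor_diff r g y S \<in> I" for S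
  proof -
    have "aug (lmap (bs 0) (bs 1) (d 1) (Z S)) \<in> I"
      using resolution_cycle_lmap[OF FR, of 0 "Z S"] Z by (simp add: resolution_cycle_def aug_def)
    moreover have "aug u * z S = taylor_diff r g y S + aug (lmap (bs 0) (bs 1) (d 1) (Z S))"
      unfolding aug_X[symmetric] X y_def aug_taylor_diff_vec[symmetric]
      by (simp add: aug_def lmap_chain_def sum.distrib distrib_right)
    then have "z S - taylor_diff r g y S = aug (lmap (bs 0) (bs 1) (d 1) (Z S)) - z S * (aug u - 1)"
      by (simp add: algebra_simps)
    ultimately show ?thesis using ideal_diff[OF I _ ideal_mult[OF I u(2)]] by simp
  qed
  ultimately show ?thesis by blast
qed

section \<open>A cycle from a split of the vertex set\<close>

lemma disconnected_complement_split:
  assumes "\<not> connected_on W (complement_on W E)" "W \<noteq> {}"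
  obtains A a b where "A \<subseteq> W" "a \<in> A" "b \<in> W - A" "\<And>x y. x \<in> A \<Longrightarrow> y \<in> W - A \<Longrightarrow> E x y"
proof -
  define R where "R = {(x, y). x \<in> W \<and> y \<in> W \<and> complement_on W E x y}"
  obtain a b where ab: "a \<in> W" "b \<in> W" "(a, b) \<notin> R\<^sup>*"
    using assms unfolding connected_on_def R_def by blast
  define A where "A = {x \<in> W. (a, x) \<in> R\<^sup>*}"
  have "E x y" if "x \<in> A" "y \<in> W - A" for x y
  proof (rule ccontr)
    assume "\<not> E x y"
    moreover have "x \<noteq> y" using that by auto
    ultimately have "(x, y) \<in> R" using that by (auto simp: R_def A_def complement_on_def)
    then have "(a, y) \<in> R\<^sup>*" using that(1) by (auto simp: A_def intro: rtrancl_into_rtrancl)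
    then show False using that(2) by (simp add: A_def)
  qed
  moreover have "A \<subseteq> W" "a \<in> A" "b \<in> W - A" using ab by (auto simp: A_def)
  ultimately show thesis using that by blast
qed

lemma taylor_diff_singletons:
  assumes "inj_on w {..<r}" "T \<subseteq> {..<r}"
  shows "taylor_diff r (\<lambda>j. {w j}) c T = (\<Sum>j\<in>{..<r} - T. insertion_sign j T * var (w j) * c (insert j T))"
  unfolding taylor_diff_def
proof (rule sum.cong)
  fix j assume "j \<in> {..<r} - T"
  then have "w j \<notin> w ` T" using assms by (auto dest: inj_onD)
  then have "(\<Union>i\<in>insert j T. {w i}) - (\<Union>i\<in>T. {w i}) = {w j}" by auto
  then show "insertion_sign j T * set_monomial ((\<Union>i\<in>insert j T. {w i}) - (\<Union>i\<in>T. {w i})) * c (insert j T) =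
      insertion_sign j T * var (w j) * c (insert j T)"
    by (simp add: var_eq_set_monomial)
qed simp

lemma insertion_sign_delete:
  "l < N \<Longrightarrow> insertion_sign l ({..<N} - {l}) = (-1) ^ l"
proof -
  assume "l < N"
  then have "{t \<in> {..<N} - {l}. t < l} = {..<l}" by auto
  then show ?thesis by (simp add: insertion_sign_def)
qed

lemma insertion_sign_delete_pair:
  assumes "j1 < j2" "j2 < N"
  shows "insertion_sign j1 ({..<N} - {j1, j2}) = (-1) ^ j1"
    and "insertion_sign j2 ({..<N} - {j1, j2}) = - ((-1) ^ j2)"
proof -
  have "{t \<in> {..<N} - {j1, j2}. t < j1} = {..<j1}" using assms by auto
  then show "insertion_sign j1 ({..<N} - {j1, j2}) = (-1) ^ j1" by (simp add: insertion_sign_def)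
  have "{t \<in> {..<N} - {j1, j2}. t < j2} = {..<j2} - {j1}" using assms by auto
  moreover obtain i where "j2 = Suc i" using assms by (cases j2) auto
  ultimately show "insertion_sign j2 ({..<N} - {j1, j2}) = - ((-1) ^ j2)"
    using assms by (simp add: insertion_sign_def)
qed

text \<open>The Koszul \<open>(N - 1)\<close>-chain \<open>\<Sum>\<^bsub>w l \<in> A\<^esub> (-1)\<^sup>l x\<^bsub>w l\<^esub> e\<^bsub>{..<N} - {l}\<^esub>\<close>: the part of the
  boundary of \<open>e\<^bsub>{..<N}\<^esub>\<close> that comes from the vertices in \<open>A\<close>.\<close>

definition split_cycle :: "nat \<Rightarrow> (nat \<Rightarrow> 'v) \<Rightarrow> 'v set \<Rightarrow> nat set \<Rightarrow> ('v, 'k::comm_ring_1) mpoly" where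
  "split_cycle N w A S = (\<Sum>l | l < N \<and> w l \<in> A \<and> S = {..<N} - {l}. (-1) ^ l * var (w l))"

lemma split_cycle_delete:
  assumes "l < N"
  shows "split_cycle N w A ({..<N} - {l}) = (if w l \<in> A then (-1) ^ l * var (w l) else 0)"
proof -
  have "{l'. l' < N \<and> w l' \<in> A \<and> {..<N} - {l} = {..<N} - {l'}} = (if w l \<in> A then {l} else {})"
    using assms by auto
  then show ?thesis by (simp add: split_cycle_def)
qed

lemma chain_in_split_cycle:
  "chain_in N (N - 1) (split_cycle N w A :: nat set \<Rightarrow> ('v, 'k::comm_ring_1) mpoly)"
proof -
  have "S \<in> subsets_of_card N (N - 1)" if nonzero: "(split_cycle N w A S :: ('v, 'k) mpoly) \<noteq> 0" for S
  proof -
    obtain l where "l \<in> {l. l < N \<and> w l \<in> A \<and> S = {..<N} - {l}}"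
      using nonzero unfolding split_cycle_def by (rule sum.not_neutral_contains_not_neutral)
    then show ?thesis by (auto simp: subsets_of_card_def)
  qed
  then show ?thesis by (simp add: chain_in_def)
qed

lemma taylor_diff_split_cycle_pair:
  assumes "inj_on w {..<N}" "j1 < j2" "j2 < N"
  shows "taylor_diff N (\<lambda>j. {w j}) (split_cycle N w A :: nat set \<Rightarrow> ('v::finite, 'k::comm_ring_1) mpoly)
      ({..<N} - {j1, j2}) =
    (-1) ^ (j1 + j2) * (of_bool (w j2 \<in> A) - of_bool (w j1 \<in> A)) * (var (w j1) * var (w j2))"
proof -
  have "{..<N} - ({..<N} - {j1, j2}) = {j1, j2}" "insert j1 ({..<N} - {j1, j2}) = {..<N} - {j2}"
    "insert j2 ({..<N} - {j1, j2}) = {..<N} - {j1}" using assms by auto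
  then show ?thesis
    using assms by (simp add: taylor_diff_singletons insertion_sign_delete_pair split_cycle_delete
        power_add algebra_simps)
qed

lemma taylor_diff_split_cycle_nonzeroD:
  assumes "taylor_diff N (\<lambda>j. {w j}) (split_cycle N w A) T \<noteq> (0 :: ('v::finite, 'k::comm_ring_1) mpoly)"
  obtains j1 j2 where "j1 < j2" "j2 < N" "T = {..<N} - {j1, j2}"
proof -
  obtain j l where "j < N" "j \<notin> T" "l < N" "insert j T = {..<N} - {l}"
    using taylor_diff_nonzeroD[OF assms]
    by (fastforce simp: split_cycle_def elim: sum.not_neutral_contains_not_neutral)
  then have "j \<noteq> l" "T = {..<N} - {j, l}" by auto
  then show thesis
    using that[of j l] that[of l j] \<open>j < N\<close> \<open>l < N\<close> by (cases "j < l") (auto simp: insert_commute)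
qed

lemma split_cycle_is_cycle:
  fixes E :: "'v::finite \<Rightarrow> 'v \<Rightarrow> bool"
  assumes inj: "inj_on w {..<N}"
    and cross: "\<And>l l'. l < N \<Longrightarrow> l' < N \<Longrightarrow> w l \<in> A \<Longrightarrow> w l' \<notin> A \<Longrightarrow> E (w l) (w l')"
  shows "taylor_diff N (\<lambda>j. {w j}) (split_cycle N w A) T \<in> (edge_ideal E :: ('v, 'k::field) mpoly set)"
proof (cases "taylor_diff N (\<lambda>j. {w j}) (split_cycle N w A) T = (0 :: ('v, 'k) mpoly)")
  case True
  then show ?thesis using ideal_zero[OF edge_ideal_is_ideal] by simp
next
  case False
  then obtain j1 j2 where j: "j1 < j2" "j2 < N" "T = {..<N} - {j1, j2}"
    by (rule taylor_diff_split_cycle_nonzeroD)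
  define \<kappa> :: "('v, 'k) mpoly" where "\<kappa> = (-1) ^ (j1 + j2) * (of_bool (w j2 \<in> A) - of_bool (w j1 \<in> A))"
  have "taylor_diff N (\<lambda>j. {w j}) (split_cycle N w A) T = \<kappa> * (var (w j1) * var (w j2))"
    using taylor_diff_split_cycle_pair[OF inj j(1,2), where A=A and 'k='k] j(3) by (simp add: \<kappa>_def)
  moreover have "\<kappa> = 0 \<or> var (w j1) * var (w j2) \<in> (edge_ideal E :: ('v, 'k) mpoly set)"
  proof (cases "w j1 \<in> A \<longleftrightarrow> w j2 \<in> A")
    case True
    then show ?thesis by (simp add: \<kappa>_def)
  next
    case False
    then consider "w j1 \<in> A" "w j2 \<notin> A" | "w j2 \<in> A" "w j1 \<notin> A" by blast
    then show ?thesis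
    proof cases
      case 1
      then have "E (w j1) (w j2)" using j cross[of j1 j2] by simp
      then show ?thesis by (simp add: edge_monomial_in_edge_ideal)
    next
      case 2
      then have "E (w j2) (w j1)" using j cross[of j2 j1] by simp
      then have "var (w j2) * var (w j1) \<in> (edge_ideal E :: ('v, 'k) mpoly set)"
        by (rule edge_monomial_in_edge_ideal)
      then show ?thesis by (simp add: mult.commute)
    qed
  qed
  ultimately show ?thesis using ideal_zero[OF edge_ideal_is_ideal] ideal_mult[OF edge_ideal_is_ideal] by auto
qed

lemma ideal_neg_one_power_mult: "is_ideal I \<Longrightarrow> (-1) ^ l * p \<in> I \<Longrightarrow> p \<in> I"
  using ideal_mult[of I "(-1) ^ l * p" "(-1) ^ l"] by (simp flip: mult.assoc power_add)

lemma split_cycle_not_boundary: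
  fixes E :: "'v::finite \<Rightarrow> 'v \<Rightarrow> bool"
  assumes G: "simple_graph E" and inj: "inj_on w {..<N}"
    and a: "a < N" "w a \<in> A" and b: "b < N" "w b \<notin> A" and y: "chain_in N N y"
  shows "\<not> (\<forall>S. split_cycle N w A S - taylor_diff N (\<lambda>j. {w j}) y S \<in> (edge_ideal E :: ('v, 'k::field) mpoly set))"
proof
  assume boundary: "\<forall>S. split_cycle N w A S - taylor_diff N (\<lambda>j. {w j}) y S \<in> (edge_ideal E :: ('v, 'k) mpoly set)"
  define c where "c = y {..<N}"
  have y_delete: "taylor_diff N (\<lambda>j. {w j}) y ({..<N} - {l}) = (-1) ^ l * var (w l) * c" if "l < N" for l
  proof -
    have "{..<N} - ({..<N} - {l}) = {l}" "insert l ({..<N} - {l}) = {..<N}" using that by auto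
    then show ?thesis using that inj by (simp add: taylor_diff_singletons insertion_sign_delete c_def)
  qed
  have "(-1) ^ a * (var (w a) * (1 - c)) \<in> (edge_ideal E :: ('v, 'k) mpoly set)"
    using boundary[rule_format, of "{..<N} - {a}"] a by (simp add: split_cycle_delete y_delete algebra_simps)
  then have "var (w a) * (1 - c) \<in> edge_ideal E" by (rule ideal_neg_one_power_mult[OF edge_ideal_is_ideal])
  then have "Poly_Mapping.lookup (var (w a) * (1 - c)) (Poly_Mapping.single (w a) 1) = 0"
    by (rule lookup_edge_ideal_var[OF G])
  then have "Poly_Mapping.lookup c 0 = 1"
    unfolding lookup_var_mult by (simp add: lookup_minus lookup_one)
  moreover have "(-1) ^ b * (var (w b) * - c) \<in> (edge_ideal E :: ('v, 'k) mpoly set)"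
    using boundary[rule_format, of "{..<N} - {b}"] b by (simp add: split_cycle_delete y_delete algebra_simps)
  then have "var (w b) * - c \<in> edge_ideal E" by (rule ideal_neg_one_power_mult[OF edge_ideal_is_ideal])
  then have "Poly_Mapping.lookup (var (w b) * - c) (Poly_Mapping.single (w b) 1) = 0"
    by (rule lookup_edge_ideal_var[OF G])
  then have "Poly_Mapping.lookup c 0 = 0"
    unfolding lookup_var_mult by simp
  ultimately show False by simp
qed

theorem theorem4p5:
  fixes E :: "'v::finite \<Rightarrow> 'v \<Rightarrow> bool" and W :: "'v set"
  assumes "simple_graph E"
    and "W \<noteq> {}"
    and "\<not> connected_on W (complement_on W E)"
  shows "pd TYPE('k::field) E \<ge> card W - 1"
proof (rule ccontr)
  assume "\<not> ?thesis"
  then have pd_less: "pd TYPE('k) E < card W - 1" by simp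
  obtain A a b where A: "A \<subseteq> W" "a \<in> A" "b \<in> W - A" and cross: "\<And>x y. x \<in> A \<Longrightarrow> y \<in> W - A \<Longrightarrow> E x y"
    using disconnected_complement_split[OF assms(3,2)] by blast
  define N where "N = card W"
  obtain w where w: "bij_betw w {..<N} W"
    using ex_bij_betw_nat_finite[of W] by (auto simp: N_def atLeast0LessThan)
  then have inj: "inj_on w {..<N}" and w_onto: "w ` {..<N} = W" by (auto simp: bij_betw_def)
  obtain la where la: "la < N" "w la \<in> A" using A w_onto by blast
  obtain lb where lb: "lb < N" "w lb \<notin> A" using A w_onto by blast
  obtain bs d e where FR: "free_resolution (edge_ideal E :: ('v, 'k) mpoly set) (pd TYPE('k) E) bs d e"
    using pd_free_resolution[OF assms(1)] by blast
  have cycle: "taylor_diff N (\<lambda>j. {w j}) (split_cycle N w A) T \<in> (edge_ideal E :: ('v, 'k) mpoly set)" for T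
    using w_onto by (intro split_cycle_is_cycle[OF inj] cross) auto
  obtain y where "chain_in N (Suc (N - 1)) y"
    "\<forall>S. split_cycle N w A S - taylor_diff N (\<lambda>j. {w j}) y S \<in> (edge_ideal E :: ('v, 'k) mpoly set)"
    using taylor_cycle_mod_ideal_is_boundary[OF edge_ideal_is_ideal FR _ chain_in_split_cycle cycle] pd_less
    by (auto simp: N_def)
  moreover have "Suc (N - 1) = N" using assms(2) by (simp add: N_def card_gt_0_iff)
  ultimately show False using split_cycle_not_boundary[OF assms(1) inj la lb, where 'k='k] by simp
qed

end
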